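(* Let $\mathbb{D}$ be $[0,1]^2$ or a mesh and let $A,B:\mathbb{D}\to\mathbb{R}$ satisfy (Q1) $A\le B$ and (Q2) $L^{(A,B)}(R)\ge0$ for all $R\in\mathfrak{R}$. If $$\min\{P_O^{(A,B)}(\mathbf{x}),\,B(\mathbf{x})-A(\mathbf{x})\}=0\quad\text{for all }\mathbf{x}\in\mathbb{D},$$ then $V_A(R)\ge0$ for every rectangle $R$ with corners in $\mathbb{D}$.
   Context: A rectangle is $[s_1,s_2]\times[t_1,t_2]$ with $s_1<s_2$, $t_1<t_2$ and corners in $\mathbb{D}$; main corners: southwest and northeast; opposite corners: southeast and northwest; $V_A(R)=A(s_1,t_1)+A(s_2,t_2)-A(s_2,t_1)-A(s_1,t_2)$. $\mathfrak{R}$ is the set of finite formal unions $R=R_1\sqcup\dots\sqcup R_n$ of rectangles (repetitions allowed), with multiplicity $m_R(\mathbf{y})=\sum_i m_{R_i}(\mathbf{y})$, where $m_{R_i}(\mathbf{y})$ is $1$ at main corners, $-1$ at opposite corners, $0$ elsewhere. $L^{(A,B)}(R)=\sum_{m_R(\mathbf{y})>0}B(\mathbf{y})m_R(\mathbf{y})+\sum_{m_R(\mathbf{y})<0}A(\mathbf{y})m_R(\mathbf{y})$; $P_O^{(A,B)}(\mathbf{x})=\inf\{L^{(A,B)}(R)/(-m_R(\mathbf{x})):R\in\mathfrak{R},m_R(\mathbf{x})<0\}$ with $\inf\emptyset=+\infty$. *)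

theory Defs
  imports "HOL-Analysis.Analysis" "HOL-Library.Extended_Real"
begin

type_synonym point = "real \<times> real"
(* a rectangle [s1,s2] x [t1,t2] is encoded as ((s1,s2),(t1,t2)) *)
type_synonym rect = "(real \<times> real) \<times> (real \<times> real)"

definition is_mesh :: "point set \<Rightarrow> bool" where
  "is_mesh D \<longleftrightarrow> (\<exists>S T. finite S \<and> finite T \<and> S \<subseteq> {0..1} \<and> T \<subseteq> {0..1}
      \<and> 0 \<in> S \<and> 1 \<in> S \<and> 0 \<in> T \<and> 1 \<in> T \<and> D = S \<times> T)"

definition is_rect :: "point set \<Rightarrow> rect \<Rightarrow> bool" where
  "is_rect D R \<longleftrightarrow> (case R of ((s1,s2),(t1,t2)) \<Rightarrow>
      s1 < s2 \<and> t1 < t2 \<and> (s1,t1) \<in> D \<and> (s2,t2) \<in> D \<and> (s2,t1) \<in> D \<and> (s1,t2) \<in> D)"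

definition V :: "(point \<Rightarrow> real) \<Rightarrow> rect \<Rightarrow> real" where
  "V A R = (case R of ((s1,s2),(t1,t2)) \<Rightarrow>
      A (s1,t1) + A (s2,t2) - A (s2,t1) - A (s1,t2))"

definition mult1 :: "rect \<Rightarrow> point \<Rightarrow> int" where
  "mult1 R y = (case R of ((s1,s2),(t1,t2)) \<Rightarrow>
      (if y = (s1,t1) \<or> y = (s2,t2) then 1
       else if y = (s2,t1) \<or> y = (s1,t2) then -1 else 0))"

(* a formal union R_1 \<sqcup> ... \<sqcup> R_n of rectangles (repetitions allowed) is a list *)
definition multR :: "rect list \<Rightarrow> point \<Rightarrow> int" where
  "multR Rs y = (\<Sum>R\<leftarrow>Rs. mult1 R y)"

definition corners :: "rect list \<Rightarrow> point set" where
  "corners Rs = (\<Union>R\<in>set Rs. case R of ((s1,s2),(t1,t2)) \<Rightarrow>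
      {(s1,t1),(s2,t2),(s2,t1),(s1,t2)})"

definition is_union :: "point set \<Rightarrow> rect list \<Rightarrow> bool" where
  "is_union D Rs \<longleftrightarrow> Rs \<noteq> [] \<and> (\<forall>R\<in>set Rs. is_rect D R)"

(* L^(A,B)(R); the nonzero multiplicities occur only at corners *)
definition L :: "(point \<Rightarrow> real) \<Rightarrow> (point \<Rightarrow> real) \<Rightarrow> rect list \<Rightarrow> real" where
  "L A B Rs = (\<Sum>y\<in>{y\<in>corners Rs. multR Rs y > 0}. B y * of_int (multR Rs y))
            + (\<Sum>y\<in>{y\<in>corners Rs. multR Rs y < 0}. A y * of_int (multR Rs y))"

(* P_O^(A,B)(x), with Inf {} = +\<infinity> *)
definition PO :: "point set \<Rightarrow> (point \<Rightarrow> real) \<Rightarrow> (point \<Rightarrow> real) \<Rightarrow> point \<Rightarrow> ereal" where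
  "PO D A B x = Inf {ereal (L A B Rs / of_int (- multR Rs x)) | Rs. is_union D Rs \<and> multR Rs x < 0}"

end

theory Submission
  imports Defs
begin

(* L^(A,B) is the sum over the corners y of the cost c_y(m(y)), where c_y(t) = B y * t for t > 0
   and A y * t otherwise; by (Q1) each c_y is sublinear, so L is subadditive under disjoint union
   and homogeneous under repetition.  If P_O(x) = 0, a union whose multiplicity at x is negative
   and whose cost is arbitrarily small per unit of multiplicity can be added to any union to cancel
   a positive multiplicity at x.  Hence (Q2) survives lowering B to A at x, and, in turn, at all
   corners of a rectangle R.  For R itself the lowered functional is exactly V_A(R). *)

definition corner_cost :: "(point \<Rightarrow> real) \<Rightarrow> (point \<Rightarrow> real) \<Rightarrow> point \<Rightarrow> real \<Rightarrow> real" where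
  "corner_cost A B y t = (if 0 < t then B y * t else A y * t)"

lemma corner_cost_add_le:
  assumes "A y \<le> B y"
  shows "corner_cost A B y (s + t) \<le> corner_cost A B y s + corner_cost A B y t"
proof -
  have "t \<le> 0 \<Longrightarrow> t * B y \<le> t * A y" for t
    using assms by (simp add: mult_left_mono_neg)
  then show ?thesis
    using assms by (auto simp: corner_cost_def algebra_simps mult_right_mono)
qed

lemma corner_cost_scale: "0 \<le> c \<Longrightarrow> corner_cost A B y (c * t) = c * corner_cost A B y t"
  by (auto simp: corner_cost_def zero_less_mult_iff)

lemma multR_Nil [simp]: "multR [] y = 0"
  by (simp add: multR_def)

lemma multR_Cons [simp]: "multR (R # Rs) y = mult1 R y + multR Rs y"
  by (simp add: multR_def)

lemma multR_append [simp]: "multR (Rs1 @ Rs2) y = multR Rs1 y + multR Rs2 y"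
  by (induction Rs1) auto

lemma multR_concat_replicate [simp]: "multR (concat (replicate n Rs)) y = int n * multR Rs y"
  by (induction n) (auto simp: algebra_simps)

lemma corners_Nil [simp]: "corners [] = {}"
  by (simp add: corners_def)

lemma corners_append [simp]: "corners (Rs1 @ Rs2) = corners Rs1 \<union> corners Rs2"
  by (simp add: corners_def)

lemma corners_concat_replicate: "corners (concat (replicate n Rs)) \<subseteq> corners Rs"
  by (induction n) auto

lemma finite_corners [simp]: "finite (corners Rs)"
  by (auto simp: corners_def split: prod.splits)

lemma corners_subset: "is_union D Rs \<Longrightarrow> corners Rs \<subseteq> D"
  by (force simp: is_union_def corners_def is_rect_def split: prod.splits)

lemma multR_eq_0_outside_corners: "y \<notin> corners Rs \<Longrightarrow> multR Rs y = 0"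
  by (induction Rs) (auto simp: corners_def mult1_def split: prod.splits)

lemma is_union_append: "is_union D Rs1 \<Longrightarrow> is_union D Rs2 \<Longrightarrow> is_union D (Rs1 @ Rs2)"
  by (auto simp: is_union_def)

lemma is_union_concat_replicate:
  "0 < n \<Longrightarrow> is_union D Rs \<Longrightarrow> is_union D (concat (replicate n Rs))"
  by (induction n) (auto simp: is_union_def)

lemma L_eq_sum_corner_cost:
  assumes "finite S" "corners Rs \<subseteq> S"
  shows "L A B Rs = (\<Sum>y\<in>S. corner_cost A B y (of_int (multR Rs y)))"
proof -
  have "(\<Sum>y\<in>S. corner_cost A B y (of_int (multR Rs y)))
      = (\<Sum>y\<in>corners Rs. corner_cost A B y (of_int (multR Rs y)))"
    by (rule sum.mono_neutral_right[OF assms])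
      (auto simp: multR_eq_0_outside_corners corner_cost_def)
  also have "\<dots> = (\<Sum>y\<in>corners Rs. (if 0 < multR Rs y then B y * of_int (multR Rs y) else 0)
      + (if multR Rs y < 0 then A y * of_int (multR Rs y) else 0))"
    by (rule sum.cong) (auto simp: corner_cost_def)
  also have "\<dots> = L A B Rs"
    unfolding L_def sum.distrib by (simp add: sum.inter_filter)
  finally show ?thesis by simp
qed

lemma L_append_le:
  assumes "\<And>y. y \<in> corners Rs1 \<union> corners Rs2 \<Longrightarrow> A y \<le> B y"
  shows "L A B (Rs1 @ Rs2) \<le> L A B Rs1 + L A B Rs2"
proof -
  let ?S = "corners Rs1 \<union> corners Rs2"
  have "L A B (Rs1 @ Rs2)
      = (\<Sum>y\<in>?S. corner_cost A B y (of_int (multR Rs1 y) + of_int (multR Rs2 y)))"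
    by (simp add: L_eq_sum_corner_cost[of ?S])
  also have "\<dots> \<le> (\<Sum>y\<in>?S. corner_cost A B y (of_int (multR Rs1 y))
      + corner_cost A B y (of_int (multR Rs2 y)))"
    by (intro sum_mono corner_cost_add_le assms)
  also have "\<dots> = L A B Rs1 + L A B Rs2"
    by (simp add: sum.distrib L_eq_sum_corner_cost[of ?S])
  finally show ?thesis .
qed

lemma L_concat_replicate: "L A B (concat (replicate n Rs)) = real n * L A B Rs"
  using corners_concat_replicate[of n Rs]
  by (simp add: L_eq_sum_corner_cost[of "corners Rs"] corner_cost_scale sum_distrib_left)

lemma L_mono:
  assumes "\<And>y. y \<in> corners Rs \<Longrightarrow> 0 < multR Rs y \<Longrightarrow> B y \<le> B' y"
  shows "L A B Rs \<le> L A B' Rs"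
  unfolding L_def using assms by (intro add_right_mono sum_mono mult_right_mono) auto

lemma L_cong:
  assumes "\<And>y. y \<in> corners Rs \<Longrightarrow> 0 < multR Rs y \<Longrightarrow> B y = B' y"
  shows "L A B Rs = L A B' Rs"
  using assms by (intro order.antisym L_mono) auto

lemma L_fun_upd_nonpos: "multR Rs x \<le> 0 \<Longrightarrow> L A (B(x := b)) Rs = L A B Rs"
  by (rule L_cong) auto

lemma PO_eq_0_witness:
  assumes "PO D A B x = 0" "0 < \<epsilon>"
  obtains Rs where "is_union D Rs" "multR Rs x < 0" "L A B Rs < \<epsilon> * of_int (- multR Rs x)"
proof -
  have "Inf {ereal (L A B Rs / of_int (- multR Rs x)) | Rs. is_union D Rs \<and> multR Rs x < 0}
      < ereal \<epsilon>"
    using assms by (simp add: PO_def)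
  then obtain Rs where "is_union D Rs" "multR Rs x < 0"
    and "L A B Rs / of_int (- multR Rs x) < \<epsilon>"
    by (auto simp: Inf_less_iff)
  moreover have "0 < real_of_int (- multR Rs x)" using \<open>multR Rs x < 0\<close> by simp
  ultimately show ?thesis
    using that pos_divide_less_eq by blast
qed

lemma L_nonneg_lower_at_point:
  assumes A_le: "\<forall>y\<in>D. A y \<le> B' y" and le_B: "\<forall>y\<in>D. B' y \<le> B y"
    and nonneg: "\<forall>Rs. is_union D Rs \<longrightarrow> 0 \<le> L A B' Rs"
    and "x \<in> D" and PO: "PO D A B x = 0"
    and union: "is_union D Rs"
  shows "0 \<le> L A (B'(x := A x)) Rs"
proof (rule ccontr)
  let ?B = "B'(x := A x)"
  assume "\<not> 0 \<le> L A ?B Rs"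
  then have neg: "L A ?B Rs < 0" by simp
  define c where "c = multR Rs x"
  have "0 < c"
  proof (rule ccontr)
    assume "\<not> 0 < c"
    then have "L A ?B Rs = L A B' Rs" by (simp add: L_fun_upd_nonpos c_def)
    with neg nonneg union show False by auto
  qed
  define \<epsilon> where "\<epsilon> = - L A ?B Rs / (2 * of_int c)"
  have "0 < \<epsilon>" using neg \<open>0 < c\<close> by (simp add: \<epsilon>_def divide_neg_pos)
  then obtain Rs' where union': "is_union D Rs'" and "multR Rs' x < 0"
    and small: "L A B Rs' < \<epsilon> * of_int (- multR Rs' x)"
    using PO_eq_0_witness[OF PO] by blast
  define k where "k = nat (- multR Rs' x)"
  have k: "int k = - multR Rs' x" "0 < k" using \<open>multR Rs' x < 0\<close> by (auto simp: k_def)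
  \<comment> \<open>k copies of Rs and c copies of Rs' cancel the multiplicity at x\<close>
  define Rs2 where "Rs2 = concat (replicate k Rs) @ concat (replicate (nat c) Rs')"
  have "is_union D Rs2"
    unfolding Rs2_def using k \<open>0 < c\<close> union union'
    by (intro is_union_append is_union_concat_replicate) auto
  have "multR Rs2 x = 0" using k \<open>0 < c\<close> by (simp add: Rs2_def c_def)
  have A_le_lowered: "\<forall>y\<in>D. A y \<le> ?B y" and lowered_le_B: "\<forall>y\<in>D. ?B y \<le> B y"
  proof -
    have "A x \<le> B x" using A_le le_B \<open>x \<in> D\<close> by (meson order.trans)
    then show "\<forall>y\<in>D. A y \<le> ?B y" "\<forall>y\<in>D. ?B y \<le> B y" using A_le le_B by simp_all
  qed
  have corners_D: "corners (concat (replicate k Rs)) \<union> corners (concat (replicate (nat c) Rs')) \<subseteq> D"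
    using corners_subset[OF \<open>is_union D Rs2\<close>] by (simp add: Rs2_def)
  have "0 \<le> L A B' Rs2" using nonneg \<open>is_union D Rs2\<close> by blast
  also have "\<dots> = L A ?B Rs2" using \<open>multR Rs2 x = 0\<close> by (simp add: L_fun_upd_nonpos)
  also have "\<dots> \<le> L A ?B (concat (replicate k Rs)) + L A ?B (concat (replicate (nat c) Rs'))"
    unfolding Rs2_def by (rule L_append_le) (use A_le_lowered corners_D in blast)
  also have "\<dots> = real k * L A ?B Rs + real (nat c) * L A ?B Rs'"
    by (simp add: L_concat_replicate)
  also have "\<dots> \<le> real k * L A ?B Rs + real (nat c) * L A B Rs'"
  proof -
    have "L A ?B Rs' \<le> L A B Rs'"
      by (rule L_mono) (use lowered_le_B corners_subset[OF union'] in blast)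
    then show ?thesis by (intro add_left_mono mult_left_mono) auto
  qed
  also have "\<dots> < real k * L A ?B Rs + of_int c * (\<epsilon> * real k)"
  proof -
    have "real_of_int (- multR Rs' x) = real k" using k(1) by (metis of_int_of_nat_eq)
    moreover have "real (nat c) = of_int c" using \<open>0 < c\<close> by simp
    ultimately show ?thesis using small \<open>0 < c\<close> by simp
  qed
  also have "\<dots> = real k * L A ?B Rs / 2"
    using \<open>0 < c\<close> by (simp add: \<epsilon>_def field_simps)
  also have "\<dots> < 0" using neg k by (simp add: mult_pos_neg)
  finally have "(0::real) < 0" .
  then show False by simp
qed

lemma L_nonneg_lower_on_finite:
  assumes Q1: "\<forall>x\<in>D. A x \<le> B x" and Q2: "\<forall>Rs. is_union D Rs \<longrightarrow> 0 \<le> L A B Rs"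
    and lowerable: "\<forall>x\<in>D. A x = B x \<or> PO D A B x = 0"
    and "finite F" "F \<subseteq> D"
  shows "\<forall>Rs. is_union D Rs \<longrightarrow> 0 \<le> L A (\<lambda>y. if y \<in> F then A y else B y) Rs"
  using \<open>finite F\<close> \<open>F \<subseteq> D\<close>
proof (induction F rule: finite_induct)
  case empty
  then show ?case using Q2 by simp
next
  case (insert x F)
  let ?B = "\<lambda>y. if y \<in> F then A y else B y"
  have upd: "(\<lambda>y. if y \<in> insert x F then A y else B y) = ?B(x := A x)"
    by auto
  have "x \<in> D" using insert.prems by simp
  show ?case
  proof (cases "A x = B x")
    case True
    then have "?B(x := A x) = ?B" by auto
    with upd insert show ?thesis by simp
  next
    case False
    then have "PO D A B x = 0" using lowerable \<open>x \<in> D\<close> by blast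
    with insert Q1 \<open>x \<in> D\<close> show ?thesis
      unfolding upd by (intro allI impI L_nonneg_lower_at_point) auto
  qed
qed

lemma L_self_rect_eq_V: "is_rect D R \<Longrightarrow> L A A [R] = V A R"
  by (auto simp: L_eq_sum_corner_cost[of "corners [R]"] corner_cost_def corners_def mult1_def
      V_def is_rect_def algebra_simps split: prod.splits)

theorem mainTheorem13:
  fixes D :: "point set" and A B :: "point \<Rightarrow> real"
  assumes "D = {0..1} \<times> {0..1} \<or> is_mesh D"
    and Q1: "\<forall>x\<in>D. A x \<le> B x"
    and Q2: "\<forall>Rs. is_union D Rs \<longrightarrow> L A B Rs \<ge> 0"
    and "\<forall>x\<in>D. min (PO D A B x) (ereal (B x - A x)) = 0"
  shows "\<forall>R. is_rect D R \<longrightarrow> V A R \<ge> 0"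
proof (intro allI impI)
  fix R assume "is_rect D R"
  then have union: "is_union D [R]" by (simp add: is_union_def)
  have lowerable: "\<forall>x\<in>D. A x = B x \<or> PO D A B x = 0"
    using Q1 assms(4) by (force simp: min_def split: if_splits)
  let ?F = "corners [R]"
  have "0 \<le> L A (\<lambda>y. if y \<in> ?F then A y else B y) [R]"
    using L_nonneg_lower_on_finite[OF Q1 _ lowerable] Q2 corners_subset[OF union] union by simp
  also have "\<dots> = L A A [R]" by (rule L_cong) auto
  also have "\<dots> = V A R" using \<open>is_rect D R\<close> by (rule L_self_rect_eq_V)
  finally show "V A R \<ge> 0" .
qed

end
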